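(* Let $k=\mathbb{F}_q$ with $q=2^m\geq 4$, let $n\geq 1$, let $B$ be a finite set and let $\mathcal{P}=\coprod_{i\in B}P_i$ with each $P_i\cong\mathbb{P}^n$ over $k$, with the natural map $h\colon\mathcal{P}\to B$, $P_i\mapsto i$. Let $\sigma$ be a permutation of $\mathcal{P}(k)=\coprod_{i\in B}P_i(k)$ such that (1) for every $i\in B$ there is $j\in B$ with $\sigma(P_i(k))=P_j(k)$, so that $\sigma$ induces a permutation $\sigma_B$ of $B$; and (2) each such bijection $P_i(k)\to P_j(k)$ is induced by a projective linear isomorphism $P_i\to P_j$ defined over $k$. Then $\sigma$ and $\sigma_B$ have the same parity. *)

theory Defs
  imports "HOL-Analysis.Analysis" "HOL-Combinatorics.Permutations"
begin

text \<open>The k-rational points of projective space P^n over a field k, where the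
  vectors live in k^{n+1} = 'k^'n (so CARD('n) = n+1).\<close>
definition proj_points :: "('k::field ^ 'n) set set" where
  "proj_points = {{c *s v | c. c \<noteq> 0} | v. v \<noteq> 0}"

definition proj_map :: "'k::field ^ 'n ^ 'n \<Rightarrow> ('k ^ 'n) set \<Rightarrow> ('k ^ 'n) set" where
  "proj_map A p = (\<lambda>v. A *v v) ` p"

end

theory Submission
  imports Defs
begin

(* The permutation sigma is the composite of two permutations of B x P^n(k): tau, which
  acts inside each fibre {i} x P^n(k) by a projective linear map, and the lift of sigma_B,
  which acts as sigma_B simultaneously on the |P^n(k)| = (q^(n+1) - 1)/(q - 1) copies of B.
  As q is even, that number is odd and the lift has the sign of sigma_B.  So it suffices that
  projective linear maps act on P^n(k) by even permutations.  The sign of this action is a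
  homomorphism from GL_(n+1)(k) to a group of order 2, and GL_(n+1)(k) is generated by
  diagonal matrices, whose order divides the odd number q - 1, and by transvections T_u,
  which are conjugate to all T_(cu) with c <> 0 and satisfy T_u T_(bu) = T_((1+b)u); taking
  b different from 0 and -1 (possible as q >= 3) shows that every such homomorphism is
  trivial. *)

section \<open>Generation of the general linear group\<close>

definition diag_mat :: "('n \<Rightarrow> 'a::zero) \<Rightarrow> 'a^'n^'n" where
  "diag_mat d = (\<chi> i j. if i = j then d i else 0)"

definition column_transvection :: "'n \<Rightarrow> 'a::zero_neq_one^'n \<Rightarrow> 'a^'n^'n" where
  "column_transvection k u = (\<chi> i j. if j = k \<and> i \<noteq> k then u $ i else of_bool (i = j))"

lemma diag_mat_mult_nth: "(diag_mat d ** X) $ i $ j = d i * X $ i $ j"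
  by (simp add: diag_mat_def matrix_matrix_mult_def if_distrib [of "\<lambda>x. x * y" for y]
      sum.delta cong: if_cong)

lemma mult_diag_mat_nth: "(X ** diag_mat d) $ i $ j = X $ i $ j * d j"
  by (simp add: diag_mat_def matrix_matrix_mult_def if_distrib [of "\<lambda>x. y * x" for y]
      sum.delta' cong: if_cong)

lemma diag_mat_mult_diag_mat: "diag_mat d ** diag_mat e = diag_mat (\<lambda>i. d i * e i)"
  by (simp add: vec_eq_iff diag_mat_mult_nth) (simp add: diag_mat_def)

lemma diag_mat_1: "diag_mat (\<lambda>_. 1) = mat 1"
  by (simp add: diag_mat_def mat_def)

lemma invertible_diag_mat:
  fixes d :: "'n::finite \<Rightarrow> 'a::field"
  assumes "\<And>i. d i \<noteq> 0"
  shows "invertible (diag_mat d)"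
  unfolding invertible_def
  by (rule exI [of _ "diag_mat (\<lambda>i. inverse (d i))"])
    (simp add: diag_mat_mult_diag_mat assms diag_mat_1)

lemma column_transvection_mult_nth:
  fixes X :: "'a::semiring_1^'m^'n"
  shows "(column_transvection k u ** X) $ i $ j = X $ i $ j + (if i = k then 0 else u $ i * X $ k $ j)"
proof -
  have "(column_transvection k u ** X) $ i $ j
      = (\<Sum>l\<in>UNIV. (if l = i then X $ l $ j else 0)
          + (if l = k \<and> i \<noteq> k then u $ i * X $ l $ j else 0))"
    unfolding matrix_matrix_mult_def column_transvection_def by (auto intro!: sum.cong)
  then show ?thesis
    by (simp add: sum.distrib)
qed

lemma mult_column_transvection_axis_nth:
  fixes X :: "'a::semiring_1^'n^'m"
  assumes "l \<noteq> k"
  shows "(X ** column_transvection k (axis l c)) $ i $ j = X $ i $ j + (if j = k then X $ i $ l * c else 0)"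
proof -
  have "(X ** column_transvection k (axis l c)) $ i $ j
      = (\<Sum>r\<in>UNIV. (if r = j then X $ i $ r else 0) + (if r = l \<and> j = k then X $ i $ r * c else 0))"
    using assms unfolding matrix_matrix_mult_def column_transvection_def axis_def
    by (auto intro!: sum.cong)
  then show ?thesis
    by (simp add: sum.distrib)
qed

lemma column_transvection_add:
  fixes u :: "'a::semiring_1^'n"
  shows "column_transvection k u ** column_transvection k v = column_transvection k (u + v)"
  by (auto simp: vec_eq_iff column_transvection_mult_nth)
    (auto simp: column_transvection_def algebra_simps)

lemma column_transvection_0: "column_transvection k 0 = mat 1"
  by (simp add: column_transvection_def mat_def vec_eq_iff)

lemma invertible_column_transvection: "invertible (column_transvection k u :: 'a::ring_1^'n^'n)"
  unfolding invertible_def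
  by (rule exI [of _ "column_transvection k (- u)"])
    (simp add: column_transvection_add column_transvection_0)

lemma diag_mat_conj_column_transvection:
  fixes c :: "'a::field"
  assumes "c \<noteq> 0"
  shows "diag_mat (\<lambda>i. if i = k then inverse c else 1) ** column_transvection k u
           ** diag_mat (\<lambda>i. if i = k then c else 1) = column_transvection k (c *s u)"
  using assms by (simp add: vec_eq_iff diag_mat_mult_nth mult_diag_mat_nth)
    (auto simp: column_transvection_def)

lemma invertible_row_nonzeroE:
  fixes A :: "'a::field^'n^'n"
  assumes "invertible A"
  obtains j where "A $ i $ j \<noteq> 0"
proof -
  have "row i A \<noteq> 0"
    using assms det_zero_row(2) invertible_det_nz by blast
  then show ?thesis
    using that by (auto simp: row_def vec_eq_iff)
qed

lemma invertible_diagonal_nonzero: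
  fixes A :: "'a::field^'n^'n"
  assumes "invertible A" and "\<And>i j. i \<noteq> j \<Longrightarrow> A $ i $ j = 0"
  shows "A $ i $ i \<noteq> 0"
proof -
  obtain j where "A $ i $ j \<noteq> 0"
    using invertible_row_nonzeroE [OF assms(1)] .
  then show ?thesis
    using assms(2) by (cases "i = j") auto
qed

text \<open>One step of Gaussian elimination: a column operation makes the pivot \<open>A $ k $ k\<close>
  nonzero, then row operations clear the rest of column \<open>k\<close> without touching the columns
  outside \<open>insert k K\<close>, which have no off-diagonal entries.\<close>
lemma clear_column:
  fixes A :: "'a::field^'n^'n"
  assumes "invertible A" and cleared: "\<And>i j. i \<noteq> j \<Longrightarrow> j \<notin> insert k K \<Longrightarrow> A $ i $ j = 0"
  obtains u v A' where "A = column_transvection k u ** A' ** column_transvection k v"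
    and "invertible A'" and "\<And>i j. i \<noteq> j \<Longrightarrow> j \<notin> K \<Longrightarrow> A' $ i $ j = 0"
proof -
  have "\<exists>v. (A ** column_transvection k v) $ k $ k \<noteq> 0 \<and>
      (\<forall>i j. j \<noteq> k \<longrightarrow> (A ** column_transvection k v) $ i $ j = A $ i $ j)"
  proof (cases "A $ k $ k = 0")
    case False
    then show ?thesis
      by (intro exI [of _ 0]) (simp add: column_transvection_0)
  next
    case True
    obtain l where "A $ k $ l \<noteq> 0"
      using invertible_row_nonzeroE [OF assms(1)] .
    moreover from this True have "l \<noteq> k"
      by auto
    ultimately show ?thesis
      using True by (intro exI [of _ "axis l 1"]) (simp add: mult_column_transvection_axis_nth)
  qed
  then obtain v where pivot: "(A ** column_transvection k v) $ k $ k \<noteq> 0"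
    and same: "\<And>i j. j \<noteq> k \<Longrightarrow> (A ** column_transvection k v) $ i $ j = A $ i $ j"
    by blast
  define B where "B = A ** column_transvection k v"
  define u where "u = (\<chi> i. B $ i $ k / B $ k $ k)"
  define A' where "A' = column_transvection k (- u) ** B"
  have "B ** column_transvection k (- v) = A"
    by (simp add: B_def column_transvection_add column_transvection_0 flip: matrix_mul_assoc)
  moreover have "column_transvection k u ** A' = B"
    by (simp add: A'_def matrix_mul_assoc column_transvection_add column_transvection_0)
  ultimately have "A = column_transvection k u ** A' ** column_transvection k (- v)"
    by simp
  moreover have "invertible A'"
    unfolding A'_def B_def
    using assms(1) invertible_column_transvection invertible_mult by blast
  moreover have "A' $ i $ j = 0" if "i \<noteq> j" "j \<notin> K" for i j
    using that pivot same cleared [of _ j]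
    by (cases "j = k") (auto simp: A'_def u_def B_def column_transvection_mult_nth)
  ultimately show ?thesis
    using that by blast
qed

lemma invertible_matrix_induct [consumes 1, case_names mult diag_mat column_transvection]:
  fixes A :: "'a::field^'n^'n"
  assumes "invertible A"
    and mult: "\<And>A B. P A \<Longrightarrow> P B \<Longrightarrow> P (A ** B)"
    and diag: "\<And>d. (\<And>i. d i \<noteq> 0) \<Longrightarrow> P (diag_mat d)"
    and transvection: "\<And>k u. P (column_transvection k u)"
  shows "P A"
proof -
  have "P A" if "invertible A" and "\<And>i j. i \<noteq> j \<Longrightarrow> j \<notin> K \<Longrightarrow> A $ i $ j = 0"
    for A and K :: "'n set"
  proof -
    have "finite K"
      by simp
    then show ?thesis
      using that
    proof (induction K arbitrary: A)
      case empty
      then have "P (diag_mat (\<lambda>i. A $ i $ i))"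
        by (intro diag invertible_diagonal_nonzero) auto
      moreover have "diag_mat (\<lambda>i. A $ i $ i) = A"
        using empty.prems(2) by (auto simp: vec_eq_iff diag_mat_def)
      ultimately show ?case
        by simp
    next
      case (insert k K)
      then obtain u v A' where "A = column_transvection k u ** A' ** column_transvection k v"
        and "P A'"
        by (metis clear_column)
      then show ?case
        using mult transvection by metis
    qed
  qed
  from this [of A UNIV, OF assms(1)] show ?thesis
    by simp
qed

section \<open>Homomorphisms from the general linear group to a group of order two\<close>

lemma power_card_minus_one_eq_1:
  fixes x :: "'a::{field,finite}"
  assumes "x \<noteq> 0"
  shows "x ^ (CARD('a) - 1) = 1"
proof -
  have "x ^ card (-{0::'a}) * (\<Prod>y\<in>-{0}. y) = (\<Prod>y\<in>-{0}. x * y)"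
    by (simp add: prod.distrib)
  also have "\<dots> = (\<Prod>y\<in>-{0}. y)"
    by (rule prod.reindex_bij_witness [of _ "\<lambda>y. y / x" "\<lambda>y. x * y"]) (use assms in auto)
  finally have "x ^ card (-{0::'a}) = 1"
    by (simp add: prod_zero_iff)
  moreover have "card (-{0::'a}) = CARD('a) - 1"
    by (simp add: Compl_eq_Diff_UNIV card_Diff_subset)
  ultimately show ?thesis
    by simp
qed

text \<open>A homomorphism into the group of order two is modelled as a map to \<^typ>\<open>bool\<close>,
  with \<open>(\<longleftrightarrow>)\<close> as group law and \<^term>\<open>True\<close> as neutral element.\<close>

context
  fixes \<phi> :: "'k::{field,finite}^'n^'n \<Rightarrow> bool"
  assumes parity_hom: "\<And>A B. invertible A \<Longrightarrow> invertible B \<Longrightarrow> \<phi> (A ** B) \<longleftrightarrow> (\<phi> A \<longleftrightarrow> \<phi> B)"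
begin

lemma parity_hom_mat_1: "\<phi> (mat 1)"
  using parity_hom [of "mat 1" "mat 1"] by (simp add: invertible_def)

lemma parity_hom_diag_mat:
  assumes "odd (CARD('k) - 1)" and "\<And>i. d i \<noteq> 0"
  shows "\<phi> (diag_mat d)"
proof -
  have "\<phi> (diag_mat (\<lambda>i. d i ^ j)) \<longleftrightarrow> \<phi> (diag_mat d) \<or> even j" for j
  proof (induction j)
    case 0
    then show ?case
      by (simp add: diag_mat_1 parity_hom_mat_1)
  next
    case (Suc j)
    have "diag_mat (\<lambda>i. d i ^ Suc j) = diag_mat d ** diag_mat (\<lambda>i. d i ^ j)"
      by (simp add: diag_mat_mult_diag_mat)
    moreover have "invertible (diag_mat (\<lambda>i. d i ^ j))"
      using assms(2) by (simp add: invertible_diag_mat)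
    ultimately show ?case
      using Suc.IH parity_hom [OF invertible_diag_mat [OF assms(2)]] by auto
  qed
  moreover have "(\<lambda>i. d i ^ (CARD('k) - 1)) = (\<lambda>_. 1)"
    using assms(2) power_card_minus_one_eq_1 by blast
  ultimately show ?thesis
    using assms(1) parity_hom_mat_1 diag_mat_1 by metis
qed

lemma parity_hom_column_transvection:
  assumes "CARD('k) \<ge> 3" and "odd (CARD('k) - 1)"
  shows "\<phi> (column_transvection k u)"
proof -
  have scale: "\<phi> (column_transvection k (c *s u)) \<longleftrightarrow> \<phi> (column_transvection k u)"
    if "c \<noteq> 0" for c u
  proof -
    let ?D = "diag_mat (\<lambda>i. if i = k then inverse c else 1)"
    let ?D' = "diag_mat (\<lambda>i. if i = k then c else 1)"
    have "invertible ?D" "invertible ?D'" "\<phi> ?D" "\<phi> ?D'"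
      using that assms(2)
      by (auto intro!: invertible_diag_mat parity_hom_diag_mat split: if_splits)
    then show ?thesis
      using parity_hom invertible_mult invertible_column_transvection
        diag_mat_conj_column_transvection [OF that, of k u, symmetric] by metis
  qed
  obtain b :: 'k where b: "b \<noteq> 0" "b \<noteq> -1"
  proof -
    have "\<not> UNIV \<subseteq> {0, -1::'k}"
      using card_mono [of "{0, -1::'k}" UNIV] card_insert_le [of "{-1::'k}" 0] assms(1) by auto
    then show ?thesis
      using that by blast
  qed
  have "column_transvection k u ** column_transvection k (b *s u)
      = column_transvection k ((1 + b) *s u)"
    by (simp add: column_transvection_add vector_sadd_rdistrib)
  moreover have "1 + b \<noteq> 0"
    using b(2) by (metis add_eq_0_iff)
  ultimately show ?thesis
    using parity_hom [OF invertible_column_transvection invertible_column_transvection]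
      scale b(1) by metis
qed

lemma parity_hom_invertible:
  assumes "CARD('k) \<ge> 3" and "odd (CARD('k) - 1)" and "invertible A"
  shows "\<phi> A"
proof -
  from \<open>invertible A\<close> have "invertible A \<and> \<phi> A"
  proof (induction rule: invertible_matrix_induct)
    case (mult A B)
    then show ?case
      using parity_hom invertible_mult by blast
  next
    case (diag_mat d)
    then show ?case
      using assms(2) by (simp add: invertible_diag_mat parity_hom_diag_mat)
  next
    case (column_transvection k u)
    then show ?case
      using assms(1,2) by (simp add: invertible_column_transvection parity_hom_column_transvection)
  qed
  then show ?thesis ..
qed

end

section \<open>Signs of permutations of a product set\<close>

lemma map_permutation_Pair_left:
  assumes "g permutes A"
  shows "map_permutation A (Pair i) g = (\<lambda>(j, a). if j = i then (i, g a) else (j, a))"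
proof -
  have "inv_into A (Pair i) (i, a) = a" if "a \<in> A" for a
    using that by (intro inv_into_f_f) (auto simp: inj_on_def)
  moreover have "(i, a) \<in> Pair i ` A \<longleftrightarrow> a \<in> A" for a
    by auto
  ultimately show ?thesis
    using assms by (auto simp: fun_eq_iff map_permutation_def restrict_id_def permutes_not_in)
qed

lemma map_permutation_Pair_right:
  assumes "g permutes B"
  shows "map_permutation B (\<lambda>j. (j, a)) g = (\<lambda>(j, b). if b = a then (g j, a) else (j, b))"
proof -
  have "inv_into B (\<lambda>j. (j, a)) (j, a) = j" if "j \<in> B" for j
    using that by (intro inv_into_f_f) (auto simp: inj_on_def)
  moreover have "(j, a) \<in> (\<lambda>j. (j, a)) ` B \<longleftrightarrow> j \<in> B" for j
    by auto
  ultimately show ?thesis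
    using assms by (auto simp: fun_eq_iff map_permutation_def restrict_id_def permutes_not_in)
qed

lemma evenperm_fiberwise:
  fixes g :: "'i \<Rightarrow> 'a \<Rightarrow> 'a"
  assumes "finite I" "finite A" "\<And>i. i \<in> I \<Longrightarrow> g i permutes A"
  shows "(\<lambda>(i, a). if i \<in> I then (i, g i a) else (i, a)) permutes I \<times> A \<and>
    (evenperm (\<lambda>(i, a). if i \<in> I then (i, g i a) else (i, a))
      \<longleftrightarrow> even (card {i \<in> I. \<not> evenperm (g i)}))"
  using assms(1,3)
proof (induction I)
  case empty
  have "(\<lambda>(i, a). if i \<in> {} then (i, g i a) else (i, a)) = id"
    by (rule ext) auto
  then show ?case
    by (simp add: id_def)
next
  case (insert x I)
  define F where "F I = (\<lambda>(i, a). if i \<in> I then (i, g i a) else (i, a))" for I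
  have gx: "g x permutes A"
    using insert.prems by simp
  have inj: "inj_on (Pair x) A"
    by (simp add: inj_on_def)
  have block: "map_permutation A (Pair x) (g x) permutes insert x I \<times> A"
    by (rule permutes_subset [OF map_permutation_permutes [OF inj_on_imp_bij_betw [OF inj] gx]])
      auto
  have "F I permutes I \<times> A" and IH: "evenperm (F I) \<longleftrightarrow> even (card {i \<in> I. \<not> evenperm (g i)})"
    using insert.IH insert.prems by (simp_all add: F_def)
  then have FI: "F I permutes insert x I \<times> A"
    by (metis permutes_subset subset_insertI Sigma_mono order_refl)
  have F: "F (insert x I) = map_permutation A (Pair x) (g x) \<circ> F I"
    using \<open>x \<notin> I\<close> by (auto simp: fun_eq_iff F_def map_permutation_Pair_left [OF gx])
  have "evenperm (F (insert x I)) \<longleftrightarrow> (evenperm (g x) \<longleftrightarrow> evenperm (F I))"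
    unfolding F using evenperm_comp permutes_imp_permutation block FI assms(2) insert.hyps(1)
      evenperm_map_permutation [OF inj gx assms(2)] by (metis finite_SigmaI finite_insert)
  moreover have "{i \<in> insert x I. \<not> evenperm (g i)}
      = (if evenperm (g x) then {} else {x}) \<union> {i \<in> I. \<not> evenperm (g i)}"
    by auto
  ultimately have "evenperm (F (insert x I)) \<longleftrightarrow> even (card {i \<in> insert x I. \<not> evenperm (g i)})"
    using IH insert.hyps by (auto simp: card_insert_if)
  moreover have "F (insert x I) permutes insert x I \<times> A"
    unfolding F by (rule permutes_compose [OF FI block])
  ultimately show ?case
    by (simp only: F_def)
qed

lemma evenperm_first_factor:
  fixes g :: "'b \<Rightarrow> 'b" and P :: "'a set"
  assumes "g permutes B" "finite B" "finite P"
  shows "(\<lambda>(j, p). if p \<in> P then (g j, p) else (j, p)) permutes B \<times> P \<and>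
    (evenperm (\<lambda>(j, p). if p \<in> P then (g j, p) else (j, p)) \<longleftrightarrow> evenperm g \<or> even (card P))"
  using assms(3)
proof (induction P)
  case empty
  have "(\<lambda>(j, p). if p \<in> {} then (g j, p) else (j, p)) = id"
    by (rule ext) auto
  then show ?case
    by (simp add: id_def)
next
  case (insert a P)
  define F where "F Q = (\<lambda>(j, p). if p \<in> Q then (g j, p) else (j, p))" for Q :: "'a set"
  have inj: "inj_on (\<lambda>j. (j, a)) B"
    by (simp add: inj_on_def)
  have layer: "map_permutation B (\<lambda>j. (j, a)) g permutes B \<times> insert a P"
    by (rule permutes_subset
        [OF map_permutation_permutes [OF inj_on_imp_bij_betw [OF inj] assms(1)]]) auto
  have "F P permutes B \<times> P" and IH: "evenperm (F P) \<longleftrightarrow> evenperm g \<or> even (card P)"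
    using insert.IH by (simp_all add: F_def)
  then have FP: "F P permutes B \<times> insert a P"
    by (metis permutes_subset subset_insertI Sigma_mono order_refl)
  have F: "F (insert a P) = map_permutation B (\<lambda>j. (j, a)) g \<circ> F P"
    using \<open>a \<notin> P\<close> by (auto simp: fun_eq_iff F_def map_permutation_Pair_right [OF assms(1)])
  have "evenperm (F (insert a P)) \<longleftrightarrow> (evenperm g \<longleftrightarrow> evenperm (F P))"
    unfolding F using evenperm_comp permutes_imp_permutation layer FP assms(2) insert.hyps(1)
      evenperm_map_permutation [OF inj assms(1,2)] by (metis finite_SigmaI finite_insert)
  then have "evenperm (F (insert a P)) \<longleftrightarrow> evenperm g \<or> even (card (insert a P))"
    using IH insert.hyps by auto
  moreover have "F (insert a P) permutes B \<times> insert a P"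
    unfolding F by (rule permutes_compose [OF FP layer])
  ultimately show ?case
    by (simp only: F_def)
qed

lemma evenperm_fibred:
  fixes \<sigma> :: "'b \<times> 'a \<Rightarrow> 'b \<times> 'a"
  assumes "finite B" "finite P" "\<sigma>B permutes B" "\<sigma> permutes B \<times> P"
    and "\<And>i. i \<in> B \<Longrightarrow> g i permutes P"
    and "\<And>i p. i \<in> B \<Longrightarrow> p \<in> P \<Longrightarrow> \<sigma> (i, p) = (\<sigma>B i, g i p)"
  shows "evenperm \<sigma> \<longleftrightarrow> ((evenperm \<sigma>B \<or> even (card P)) \<longleftrightarrow> even (card {i \<in> B. \<not> evenperm (g i)}))"
proof -
  define \<tau> where "\<tau> = (\<lambda>(i, p). if i \<in> B then (i, g i p) else (i, p))"
  define L where "L = (\<lambda>(j, p). if p \<in> P then (\<sigma>B j, p) else (j, p))"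
  have \<tau>: "\<tau> permutes B \<times> P" "evenperm \<tau> \<longleftrightarrow> even (card {i \<in> B. \<not> evenperm (g i)})"
    using evenperm_fiberwise [OF assms(1,2,5)] by (simp_all add: \<tau>_def)
  have L: "L permutes B \<times> P" "evenperm L \<longleftrightarrow> evenperm \<sigma>B \<or> even (card P)"
    using evenperm_first_factor [OF assms(3,1,2)] by (simp_all add: L_def)
  have "\<sigma> = L \<circ> \<tau>"
  proof
    fix x :: "'b \<times> 'a"
    obtain i p where x: "x = (i, p)"
      by fastforce
    show "\<sigma> x = (L \<circ> \<tau>) x"
    proof (cases "i \<in> B \<and> p \<in> P")
      case True
      then show ?thesis
        using assms(5,6) by (simp add: x L_def \<tau>_def permutes_in_image)
    next
      case False
      have "g i p = p" if "i \<in> B"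
        using False that permutes_not_in [OF assms(5)] by blast
      with False show ?thesis
        using permutes_not_in [OF assms(4)] permutes_not_in [OF assms(3)]
        by (auto simp: x L_def \<tau>_def)
    qed
  qed
  moreover have "permutation L" "permutation \<tau>"
    using permutes_imp_permutation [OF finite_cartesian_product [OF assms(1,2)]] L(1) \<tau>(1)
    by blast+
  ultimately show ?thesis
    using L(2) \<tau>(2) by (simp add: evenperm_comp)
qed

section \<open>Projective linear maps act on \<open>P\<^sup>n(k)\<close> by even permutations\<close>

definition proj_point :: "'k::field^'n \<Rightarrow> ('k^'n) set" where
  "proj_point v = (\<lambda>c. c *s v) ` (- {0})"

lemma proj_points_eq_image: "proj_points = proj_point ` (- {0})"
  by (auto simp: proj_points_def proj_point_def)

lemma proj_point_self: "v \<in> proj_point v"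
  by (auto simp: proj_point_def intro: rev_image_eqI [of 1])

lemma proj_point_smult:
  assumes "c \<noteq> 0"
  shows "proj_point (c *s v) = proj_point v"
proof (intro set_eqI iffI)
  fix w
  assume "w \<in> proj_point (c *s v)"
  then obtain a where "a \<noteq> 0" "w = (a * c) *s v"
    by (auto simp: proj_point_def vector_smult_assoc)
  with assms show "w \<in> proj_point v"
    by (auto simp: proj_point_def)
next
  fix w
  assume "w \<in> proj_point v"
  then obtain b where "b \<noteq> 0" "w = (b / c) *s (c *s v)"
    using assms by (auto simp: proj_point_def vector_smult_assoc)
  moreover have "b / c \<noteq> 0"
    using \<open>b \<noteq> 0\<close> assms by simp
  ultimately show "w \<in> proj_point (c *s v)"
    unfolding proj_point_def by blast
qed

lemma proj_point_eq_if_mem: "w \<in> proj_point v \<Longrightarrow> proj_point w = proj_point v"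
  by (auto simp: proj_point_def [of v] proj_point_smult)

lemma card_proj_point:
  fixes v :: "'k::{field,finite}^'n"
  assumes "v \<noteq> 0"
  shows "card (proj_point v) = CARD('k) - 1"
proof -
  have "inj_on (\<lambda>c. c *s v) (- {0})"
    using assms by (auto simp: inj_on_def vec_eq_iff)
  then show ?thesis
    by (simp add: proj_point_def card_image Compl_eq_Diff_UNIV card_Diff_subset)
qed

lemma card_proj_points:
  "card (proj_points :: ('k::{field,finite}^'n) set set) * (CARD('k) - 1) = CARD('k) ^ CARD('n) - 1"
proof -
  let ?P = "proj_points :: ('k^'n) set set"
  have "\<Union> ?P = - {0}"
  proof
    show "\<Union> ?P \<subseteq> - {0}"
      by (auto simp: proj_points_eq_image proj_point_def)
    show "- {0} \<subseteq> \<Union> ?P"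
      using proj_point_self by (auto simp: proj_points_eq_image)
  qed
  moreover have "(CARD('k) - 1) * card ?P = card (\<Union> ?P)"
  proof (rule card_partition)
    show "finite (\<Union> ?P)" "finite ?P"
      by simp_all
    show "card p = CARD('k) - 1" if "p \<in> ?P" for p
      using that card_proj_point unfolding proj_points_eq_image by blast
    show "p \<inter> p' = {}" if "p \<in> ?P" "p' \<in> ?P" "p \<noteq> p'" for p p'
      using that by (auto simp: proj_points_eq_image dest: proj_point_eq_if_mem)
  qed
  ultimately show ?thesis
    by (simp add: Compl_eq_Diff_UNIV card_Diff_subset mult.commute)
qed

lemma odd_card_proj_points:
  assumes "even CARD('k::{field,finite})"
  shows "odd (card (proj_points :: ('k^'n) set set))"
proof -
  have "even (CARD('k) ^ CARD('n))" "CARD('k) ^ CARD('n) > 0"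
    using assms by simp_all
  moreover have "odd (x - 1)" if "even x" "x > 0" for x :: nat
    using that by presburger
  ultimately have "odd (CARD('k) ^ CARD('n) - 1)"
    by blast
  then show ?thesis
    using card_proj_points [where 'k = 'k and 'n = 'n] by (metis even_mult_iff)
qed

lemma proj_map_proj_point: "proj_map A (proj_point v) = proj_point (A *v v)"
  by (simp add: proj_map_def proj_point_def image_image vector_scalar_commute)

lemma proj_map_in_proj_points:
  assumes "invertible A" and "p \<in> proj_points"
  shows "proj_map A p \<in> proj_points"
proof -
  obtain v where "v \<noteq> 0" "p = proj_point v"
    using assms(2) by (auto simp: proj_points_eq_image)
  moreover have "A *v v \<noteq> 0"
    using \<open>v \<noteq> 0\<close> assms(1) invertible_eq_bij [of A]
    by (metis bij_is_inj injD matrix_vector_mult_0_right)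
  ultimately show ?thesis
    by (simp add: proj_points_eq_image proj_map_proj_point)
qed

definition proj_perm :: "'k::field^'n^'n \<Rightarrow> ('k^'n) set \<Rightarrow> ('k^'n) set" where
  "proj_perm A p = (if p \<in> proj_points then proj_map A p else p)"

lemma proj_perm_mult:
  assumes "invertible B"
  shows "proj_perm (A ** B) = proj_perm A \<circ> proj_perm B"
  using proj_map_in_proj_points [OF assms]
  by (auto simp: fun_eq_iff proj_perm_def proj_map_def image_image matrix_vector_mul_assoc)

lemma proj_perm_mat_1: "proj_perm (mat 1) = id"
  by (auto simp: fun_eq_iff proj_perm_def proj_map_def)

lemma proj_perm_permutes:
  assumes "invertible A"
  shows "proj_perm A permutes proj_points"
proof -
  obtain A' where A': "A ** A' = mat 1" "A' ** A = mat 1"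
    using assms by (auto simp: invertible_def)
  then have "invertible A'"
    by (auto simp: invertible_def)
  then have "proj_perm A \<circ> proj_perm A' = id" "proj_perm A' \<circ> proj_perm A = id"
    using A' proj_perm_mult [OF assms] proj_perm_mult proj_perm_mat_1 by metis+
  then have "\<exists>!p. proj_perm A p = p'" for p'
    by (metis comp_apply id_apply)
  moreover have "proj_perm A p = p" if "p \<notin> proj_points" for p
    using that by (simp add: proj_perm_def)
  ultimately show ?thesis
    unfolding permutes_def by blast
qed

lemma permutation_proj_perm:
  fixes A :: "'k::{field,finite}^'n^'n"
  shows "invertible A \<Longrightarrow> permutation (proj_perm A)"
  by (rule permutes_imp_permutation [OF _ proj_perm_permutes]) simp_all

lemma evenperm_proj_perm:
  fixes A :: "'k::{field,finite}^'n^'n"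
  assumes "CARD('k) \<ge> 3" and "odd (CARD('k) - 1)" and "invertible A"
  shows "evenperm (proj_perm A)"
proof (rule parity_hom_invertible [OF _ assms])
  fix A B :: "'k^'n^'n"
  assume "invertible A" "invertible B"
  then show "evenperm (proj_perm (A ** B)) \<longleftrightarrow> (evenperm (proj_perm A) \<longleftrightarrow> evenperm (proj_perm B))"
    by (simp add: proj_perm_mult evenperm_comp permutation_proj_perm)
qed

theorem lemma3p7:
  fixes m :: nat
    and B :: "'b set"
    and \<sigma> :: "'b \<times> ('k::{field,finite} ^ 'n) set \<Rightarrow> 'b \<times> ('k ^ 'n) set"
    and \<sigma>B :: "'b \<Rightarrow> 'b"
  assumes q: "CARD('k) = 2 ^ m" and q4: "2 ^ m \<ge> (4::nat)"
    and n1: "CARD('n) \<ge> 2"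
    and finB: "finite B"
    and perm: "\<sigma> permutes (B \<times> proj_points)"
    and permB: "\<sigma>B permutes B"
    and blocks: "\<forall>i\<in>B. \<sigma> ` ({i} \<times> proj_points) = {\<sigma>B i} \<times> proj_points"
    and linear: "\<forall>i\<in>B. \<exists>A :: 'k ^ 'n ^ 'n. invertible A \<and>
                   (\<forall>p\<in>proj_points. \<sigma> (i, p) = (\<sigma>B i, proj_map A p))"
  shows "evenperm \<sigma> = evenperm \<sigma>B"
proof -
  let ?P = "proj_points :: ('k^'n) set set"
  obtain A where A: "\<And>i. i \<in> B \<Longrightarrow> invertible (A i)"
    and \<sigma>_A: "\<And>i p. i \<in> B \<Longrightarrow> p \<in> ?P \<Longrightarrow> \<sigma> (i, p) = (\<sigma>B i, proj_map (A i) p)"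
    using bchoice [OF linear] by blast
  have "m \<noteq> 0"
    using q4 by (cases m) auto
  then have "even CARD('k)" and "CARD('k) \<ge> 3" and "odd (CARD('k) - 1)"
    using q q4 by auto
  have "\<sigma> (i, p) = (\<sigma>B i, proj_perm (A i) p)" if "i \<in> B" "p \<in> ?P" for i p
    using that \<sigma>_A by (simp add: proj_perm_def)
  then have "evenperm \<sigma> \<longleftrightarrow>
      ((evenperm \<sigma>B \<or> even (card ?P)) \<longleftrightarrow> even (card {i \<in> B. \<not> evenperm (proj_perm (A i))}))"
    using evenperm_fibred [OF finB _ permB perm] proj_perm_permutes [OF A] by simp
  moreover have "{i \<in> B. \<not> evenperm (proj_perm (A i))} = {}"
    using A evenperm_proj_perm \<open>CARD('k) \<ge> 3\<close> \<open>odd (CARD('k) - 1)\<close> by blast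
  ultimately show ?thesis
    using odd_card_proj_points [OF \<open>even CARD('k)\<close>, where 'n = 'n] by simp
qed

end
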